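(* Let $\kappa$ be an uncountable cardinal with $\kappa=\kappa^{<\kappa}$. Then there is a sequence $\langle A_\gamma\subseteq{}^\kappa\kappa : \gamma<2^\kappa\rangle$ of pairwise disjoint sets, each of which is the image of ${}^\kappa\kappa$ under a continuous injective function ${}^\kappa\kappa\to{}^\kappa\kappa$, such that for all $\gamma<\delta<2^\kappa$ the sets $A_\gamma$ and $A_\delta$ cannot be separated by a set with the $\kappa$-Baire property, i.e. there is no $X\subseteq{}^\kappa\kappa$ with the $\kappa$-Baire property such that $A_\gamma\subseteq X\subseteq{}^\kappa\kappa\setminus A_\delta$.
   Context: ${}^\kappa\kappa$ is the set of functions $\kappa\to\kappa$, with the topology whose basic open sets are $N_s=\{x\in{}^\kappa\kappa : s\subseteq x\}$ for $s$ a function from some ordinal $\alpha<\kappa$ to $\kappa$. A subset $A$ of ${}^\kappa\kappa$ has the $\kappa$-Baire property if there is an open set $U\subseteq{}^\kappa\kappa$ and a sequence $\langle N_\alpha:\alpha<\kappa\rangle$ of nowhere dense subsets of ${}^\kappa\kappa$ such that the symmetric difference of $A$ and $U$ is contained in $\bigcup_{\alpha<\kappa}N_\alpha$. *)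

theory Defs
  imports "HOL-Analysis.Analysis" "HOL-Library.FuncSet"
begin

text \<open>The cardinal kappa is represented by a type 'k together with a cardinal
  well-order r on it (card_order r).  Ordinals alpha < kappa are elements of 'k,
  and the ordinal alpha itself is the set underS r alpha of its predecessors.\<close>

definition basic_nbhd :: "'k rel \<Rightarrow> 'k \<Rightarrow> ('k \<Rightarrow> 'k) \<Rightarrow> ('k \<Rightarrow> 'k) set" where
  "basic_nbhd r \<alpha> s = {x. \<forall>\<beta>\<in>underS r \<alpha>. x \<beta> = s \<beta>}"

definition kappa_top :: "'k rel \<Rightarrow> ('k \<Rightarrow> 'k) topology" where
  "kappa_top r = topology_generated_by {basic_nbhd r \<alpha> s | \<alpha> s. True}"

definition nowhere_dense_in :: "'a topology \<Rightarrow> 'a set \<Rightarrow> bool" where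
  "nowhere_dense_in T N \<longleftrightarrow> T interior_of (T closure_of N) = {}"

definition kappa_Baire :: "'k rel \<Rightarrow> ('k \<Rightarrow> 'k) set \<Rightarrow> bool" where
  "kappa_Baire r A \<longleftrightarrow>
     (\<exists>U N. openin (kappa_top r) U \<and> (\<forall>\<alpha>::'k. nowhere_dense_in (kappa_top r) (N \<alpha>))
        \<and> (A - U) \<union> (U - A) \<subseteq> (\<Union>\<alpha>. N \<alpha>))"

end

theory Submission
  imports Defs
begin

text \<open>For \<open>y \<in> \<kappa>\<^sup>\<kappa>\<close> and \<open>\<gamma> \<subseteq> \<kappa>\<close> the point \<open>emb \<gamma> y\<close> is assembled from
  consecutive segments, one for each stage \<open>i < \<kappa>\<close>. At a non-limit stage the segment copies
  the sequence of length \<open>< \<kappa>\<close> whose index (via \<open>\<kappa>\<^sup><\<^sup>\<kappa> = \<kappa>\<close>) is \<open>y i\<close>; at a limit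
  stage it is a single value coding \<open>\<gamma>\<close> and \<open>y\<close> below that stage. The segments before stage
  \<open>i\<close> depend only on \<open>y\<close> below \<open>i\<close>, so \<open>emb \<gamma>\<close> is continuous, and the free choice at
  non-limit stages makes its range dense and preimages of nowhere dense sets nowhere dense.
  Since \<open>cf \<kappa> > \<omega>\<close>, the segmentations of any two \<open>y\<close>, \<open>y'\<close> share a limit stage above any
  bound, and the codes stored there show that \<open>emb \<gamma> y = emb \<delta> y'\<close> forces \<open>\<gamma> = \<delta>\<close> and
  \<open>y = y'\<close>.

  If \<open>X \<supseteq> range (emb \<gamma>)\<close> is disjoint from \<open>range (emb \<delta>)\<close> and differs from an open \<open>U\<close> by
  a meagre set, then either \<open>U = {}\<close> and \<open>\<kappa>\<^sup>\<kappa> = emb \<gamma> -` X\<close> is meagre, or \<open>U\<close> meets the dense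
  range of \<open>emb \<delta>\<close> and the nonempty open set \<open>emb \<delta> -` U\<close> is meagre. Both contradict the
  Baire category theorem for \<open>\<kappa>\<^sup>\<kappa>\<close>, which holds because \<open>\<kappa>\<close> is regular.\<close>

unbundle cardinal_syntax

lemma nowhere_dense_in_preimage:
  assumes f: "continuous_map S T f" and N: "nowhere_dense_in T N"
    and somewhere_dense:
      "\<And>V. openin S V \<Longrightarrow> V \<noteq> {} \<Longrightarrow> T interior_of (T closure_of (f ` V)) \<noteq> {}"
  shows "nowhere_dense_in S {x \<in> topspace S. f x \<in> N}"
  unfolding nowhere_dense_in_def
proof (rule ccontr)
  let ?P = "{x \<in> topspace S. f x \<in> N}"
  let ?W = "S interior_of (S closure_of ?P)"
  assume "?W \<noteq> {}"
  have "f ` ?W \<subseteq> f ` (S closure_of ?P)"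
    by (intro image_mono interior_of_subset)
  also have "\<dots> \<subseteq> T closure_of (f ` ?P)"
    by (rule continuous_map_image_closure_subset[OF f])
  also have "\<dots> \<subseteq> T closure_of N"
    by (rule closure_of_mono) blast
  finally have "T closure_of (f ` ?W) \<subseteq> T closure_of N"
    by (metis closure_of_closure_of closure_of_mono)
  then have "T interior_of (T closure_of (f ` ?W)) \<subseteq> T interior_of (T closure_of N)"
    by (rule interior_of_mono)
  then show False
    using somewhere_dense[OF openin_interior_of \<open>?W \<noteq> {}\<close>] N unfolding nowhere_dense_in_def by blast
qed

section \<open>Basic open sets of the generalized Baire space\<close>

locale kappa_space = wo_rel r for r :: "'k rel" +
  assumes Field_UNIV[simp]: "Field r = UNIV"
begin

abbreviation r_le (infix "\<sqsubseteq>" 50) where "a \<sqsubseteq> b \<equiv> (a, b) \<in> r"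
abbreviation r_less (infix "\<sqsubset>" 50) where "a \<sqsubset> b \<equiv> (a, b) \<in> r \<and> a \<noteq> b"

lemma r_le_refl: "a \<sqsubseteq> a"
  using REFL by (simp add: refl_on_def)

lemma r_le_trans: "a \<sqsubseteq> b \<Longrightarrow> b \<sqsubseteq> c \<Longrightarrow> a \<sqsubseteq> c"
  using TRANS by (blast dest: transD)

lemma r_le_antisym: "a \<sqsubseteq> b \<Longrightarrow> b \<sqsubseteq> a \<Longrightarrow> a = b"
  using ANTISYM by (blast dest: antisymD)

lemma r_not_le: "\<not> a \<sqsubseteq> b \<longleftrightarrow> b \<sqsubset> a"
  using TOTALS r_le_antisym r_le_refl by auto

lemma r_less_le_trans: "a \<sqsubset> b \<Longrightarrow> b \<sqsubseteq> c \<Longrightarrow> a \<sqsubset> c"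
  using r_le_trans r_le_antisym by blast

lemma r_le_less_trans: "a \<sqsubseteq> b \<Longrightarrow> b \<sqsubset> c \<Longrightarrow> a \<sqsubset> c"
  using r_le_trans r_le_antisym by blast

lemma r_less_trans: "a \<sqsubset> b \<Longrightarrow> b \<sqsubset> c \<Longrightarrow> a \<sqsubset> c"
  using r_less_le_trans by blast

lemma mem_underS_iff[simp]: "b \<in> underS a \<longleftrightarrow> b \<sqsubset> a"
  unfolding underS_def by auto

lemma mem_under_iff[simp]: "b \<in> under a \<longleftrightarrow> b \<sqsubseteq> a"
  unfolding under_def by simp

lemmas minim_mem = minim_in[unfolded Field_UNIV, OF subset_UNIV]
lemmas minim_le = minim_least[unfolded Field_UNIV, OF subset_UNIV]

lemma minim_Collect: "P a \<Longrightarrow> P (minim {x. P x})"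
  by (metis empty_iff mem_Collect_eq minim_mem)
lemmas max2_ge = max2_greater[unfolded Field_UNIV, OF UNIV_I UNIV_I]

lemma strict_mono_r_ge:
  assumes "\<And>i j. i \<sqsubset> j \<Longrightarrow> f i \<sqsubset> f j"
  shows "i \<sqsubseteq> f i"
proof (rule ccontr)
  assume "\<not> i \<sqsubseteq> f i"
  then have "f i \<sqsubset> i"
    by (rule r_not_le[THEN iffD1])
  then have "f (minim {j. f j \<sqsubset> j}) \<sqsubset> minim {j. f j \<sqsubset> j}" (is "f ?j \<sqsubset> ?j")
    by (rule minim_Collect)
  moreover from this have "f (f ?j) \<sqsubset> f ?j"
    by (rule assms)
  then have "?j \<sqsubseteq> f ?j"
    by (intro minim_le) simp
  ultimately show False
    using r_le_antisym by blast
qed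

lemma mem_basic_nbhd_iff: "y \<in> basic_nbhd r \<alpha> x \<longleftrightarrow> (\<forall>\<beta>. \<beta> \<sqsubset> \<alpha> \<longrightarrow> y \<beta> = x \<beta>)"
  unfolding basic_nbhd_def by auto

lemma basic_nbhd_self: "x \<in> basic_nbhd r \<alpha> x"
  unfolding mem_basic_nbhd_iff by simp

lemma basic_nbhd_antimono: "\<alpha> \<sqsubseteq> \<alpha>' \<Longrightarrow> basic_nbhd r \<alpha>' x \<subseteq> basic_nbhd r \<alpha> x"
  unfolding mem_basic_nbhd_iff subset_iff using r_less_le_trans by blast

lemma basic_nbhd_recenter: "y \<in> basic_nbhd r \<alpha> x \<Longrightarrow> basic_nbhd r \<alpha> y = basic_nbhd r \<alpha> x"
  unfolding basic_nbhd_def by auto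

lemma basic_nbhd_trans: "y \<in> basic_nbhd r \<alpha> x \<Longrightarrow> z \<in> basic_nbhd r \<alpha> y \<Longrightarrow> z \<in> basic_nbhd r \<alpha> x"
  using basic_nbhd_recenter by blast

lemma basic_nbhd_minim_UNIV: "basic_nbhd r (minim UNIV) x = UNIV"
  using minim_le[of _ UNIV] r_le_antisym unfolding basic_nbhd_def by auto

text \<open>A pair \<open>(l, w)\<close> stands for the basic neighbourhood \<open>basic_nbhd r l w\<close>; the glued point
  reads each coordinate off the first approximation in \<open>I\<close> that fixes it.\<close>
definition glue :: "('k \<Rightarrow> 'k \<times> ('k \<Rightarrow> 'k)) \<Rightarrow> 'k set \<Rightarrow> ('k \<Rightarrow> 'k) \<Rightarrow> 'k \<Rightarrow> 'k" where
  "glue P I x0 \<beta> =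
     (if \<exists>j\<in>I. \<beta> \<sqsubset> fst (P j) then snd (P (minim {j\<in>I. \<beta> \<sqsubset> fst (P j)})) \<beta> else x0 \<beta>)"

lemma glue_mem_basic_nbhd:
  assumes chain: "\<And>j j'. j \<in> I \<Longrightarrow> j' \<in> I \<Longrightarrow> j \<sqsubset> j' \<Longrightarrow>
      snd (P j') \<in> basic_nbhd r (fst (P j)) (snd (P j))"
    and j: "j \<in> I"
  shows "glue P I x0 \<in> basic_nbhd r (fst (P j)) (snd (P j))"
  unfolding mem_basic_nbhd_iff
proof (intro allI impI)
  fix \<beta> assume \<beta>: "\<beta> \<sqsubset> fst (P j)"
  let ?m = "minim {j\<in>I. \<beta> \<sqsubset> fst (P j)}"
  have "?m \<in> {j\<in>I. \<beta> \<sqsubset> fst (P j)}"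
    using j \<beta> by (intro minim_mem) auto
  moreover have "?m \<sqsubseteq> j"
    using j \<beta> by (intro minim_le) simp
  ultimately have "snd (P ?m) \<beta> = snd (P j) \<beta>"
    using chain[of ?m j] j unfolding mem_basic_nbhd_iff by (cases "?m = j") auto
  moreover have "glue P I x0 \<beta> = snd (P ?m) \<beta>"
    unfolding glue_def using j \<beta> by auto
  ultimately show "glue P I x0 \<beta> = snd (P j) \<beta>"
    by simp
qed

lemma topspace_kappa_top[simp]: "topspace (kappa_top r) = UNIV"
  unfolding kappa_top_def topology_generated_by_topspace using basic_nbhd_self by blast

lemma openin_kappa_top_iff:
  "openin (kappa_top r) U \<longleftrightarrow> (\<forall>x\<in>U. \<exists>\<alpha>. basic_nbhd r \<alpha> x \<subseteq> U)"
proof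
  assume "openin (kappa_top r) U"
  then have "generate_topology_on {basic_nbhd r \<alpha> s |\<alpha> s. True} U"
    unfolding kappa_top_def by (rule openin_topology_generated_by)
  then show "\<forall>x\<in>U. \<exists>\<alpha>. basic_nbhd r \<alpha> x \<subseteq> U"
  proof (induction rule: generate_topology_on.induct)
    case (Int a b)
    show ?case
    proof
      fix x assume "x \<in> a \<inter> b"
      then obtain \<alpha> \<alpha>' where "basic_nbhd r \<alpha> x \<subseteq> a" "basic_nbhd r \<alpha>' x \<subseteq> b"
        using Int.IH by blast
      then have "basic_nbhd r (max2 \<alpha> \<alpha>') x \<subseteq> a \<inter> b"
        using basic_nbhd_antimono max2_ge by blast
      then show "\<exists>\<alpha>. basic_nbhd r \<alpha> x \<subseteq> a \<inter> b" ..
    qed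
  next
    case (UN K)
    then show ?case by blast
  next
    case (Basis s)
    then obtain \<alpha> x where "s = basic_nbhd r \<alpha> x"
      by blast
    then show ?case
      using basic_nbhd_recenter by blast
  qed simp
next
  assume U: "\<forall>x\<in>U. \<exists>\<alpha>. basic_nbhd r \<alpha> x \<subseteq> U"
  let ?K = "{basic_nbhd r \<alpha> x | \<alpha> x. basic_nbhd r \<alpha> x \<subseteq> U}"
  have "U \<subseteq> \<Union>?K"
  proof
    fix x assume "x \<in> U"
    then obtain \<alpha> where "basic_nbhd r \<alpha> x \<subseteq> U"
      using U by blast
    then show "x \<in> \<Union>?K"
      using basic_nbhd_self[of x \<alpha>] by blast
  qed
  then have "U = \<Union>?K"
    by blast
  moreover have "openin (kappa_top r) (\<Union>?K)"
    unfolding kappa_top_def openin_topology_generated_by_iff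
    by (rule generate_topology_on.UN) (auto intro: generate_topology_on.Basis)
  ultimately show "openin (kappa_top r) U"
    by simp
qed

lemma openin_basic_nbhd: "openin (kappa_top r) (basic_nbhd r \<alpha> x)"
  unfolding openin_kappa_top_iff using basic_nbhd_recenter by (intro ballI exI[of _ \<alpha>]) auto

lemma in_closure_of_kappa_top_iff:
  "x \<in> kappa_top r closure_of S \<longleftrightarrow> (\<forall>\<alpha>. basic_nbhd r \<alpha> x \<inter> S \<noteq> {})"
proof
  assume x: "x \<in> kappa_top r closure_of S"
  show "\<forall>\<alpha>. basic_nbhd r \<alpha> x \<inter> S \<noteq> {}"
  proof
    fix \<alpha>
    show "basic_nbhd r \<alpha> x \<inter> S \<noteq> {}"
      using x basic_nbhd_self[of x \<alpha>] openin_basic_nbhd[of \<alpha> x] unfolding in_closure_of by blast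
  qed
next
  assume H: "\<forall>\<alpha>. basic_nbhd r \<alpha> x \<inter> S \<noteq> {}"
  show "x \<in> kappa_top r closure_of S"
    unfolding in_closure_of
  proof (intro conjI allI impI)
    fix T assume "x \<in> T \<and> openin (kappa_top r) T"
    then obtain \<alpha> where "basic_nbhd r \<alpha> x \<subseteq> T"
      using openin_kappa_top_iff by blast
    then show "\<exists>y. y \<in> S \<and> y \<in> T"
      using H by blast
  qed simp
qed

lemma continuous_map_kappa_topI:
  assumes "\<And>y \<alpha>. \<exists>\<theta>. f ` basic_nbhd r \<theta> y \<subseteq> basic_nbhd r \<alpha> (f y)"
  shows "continuous_map (kappa_top r) (kappa_top r) f"
  unfolding continuous_map_def openin_kappa_top_iff
proof (intro conjI ballI allI impI)
  fix U y assume U: "\<forall>x\<in>U. \<exists>\<alpha>. basic_nbhd r \<alpha> x \<subseteq> U" and "y \<in> {x \<in> topspace (kappa_top r). f x \<in> U}"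
  then obtain \<alpha> where "basic_nbhd r \<alpha> (f y) \<subseteq> U"
    by auto
  moreover obtain \<theta> where "f ` basic_nbhd r \<theta> y \<subseteq> basic_nbhd r \<alpha> (f y)"
    using assms by blast
  ultimately show "\<exists>\<theta>. basic_nbhd r \<theta> y \<subseteq> {x \<in> topspace (kappa_top r). f x \<in> U}"
    by auto
qed simp

lemma nowhere_dense_in_disjoint_basic_nbhd:
  assumes "nowhere_dense_in (kappa_top r) N"
  shows "\<exists>l w. m \<sqsubseteq> l \<and> w \<in> basic_nbhd r m x \<and> basic_nbhd r l w \<inter> N = {}"
proof -
  have "\<not> basic_nbhd r m x \<subseteq> kappa_top r closure_of N"
    using assms interior_of_maximal[OF _ openin_basic_nbhd] basic_nbhd_self
    unfolding nowhere_dense_in_def by blast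
  then obtain w where "w \<in> basic_nbhd r m x" "w \<notin> kappa_top r closure_of N"
    by blast
  then obtain \<alpha> where w: "w \<in> basic_nbhd r m x" "basic_nbhd r \<alpha> w \<inter> N = {}"
    unfolding in_closure_of_kappa_top_iff by blast
  then have "basic_nbhd r (max2 \<alpha> m) w \<inter> N = {}"
    using basic_nbhd_antimono max2_ge by blast
  with w max2_ge show ?thesis
    by blast
qed

end

section \<open>Regularity and the Baire category theorem\<close>

locale kappa_lt_kappa =
  fixes r :: "'k rel"
  assumes card_order: "card_order r"
    and infinite_kappa: "infinite (UNIV :: 'k set)"
    and card_short_seqs: "|SIGMA \<alpha>:UNIV. underS r \<alpha> \<rightarrow>\<^sub>E (UNIV :: 'k set)| =o r"

sublocale kappa_lt_kappa \<subseteq> kappa_space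
proof
  have "well_order_on UNIV r"
    using card_order by (rule card_order_on_well_order_on)
  moreover from this show "Field r = UNIV"
    by (metis well_order_on_Field)
  ultimately show "Well_order r"
    by simp
qed

context kappa_lt_kappa
begin

abbreviation short_seqs :: "('k \<times> ('k \<Rightarrow> 'k)) set" where
  "short_seqs \<equiv> SIGMA \<alpha>:UNIV. underS \<alpha> \<rightarrow>\<^sub>E UNIV"

lemma r_ordIso_UNIV: "r =o |UNIV :: 'k set|"
  using card_of_unique card_order by blast

definition seq_enum :: "'k \<Rightarrow> 'k \<times> ('k \<Rightarrow> 'k)" where
  "seq_enum = (SOME F. bij_betw F UNIV short_seqs)"

definition seq_code :: "'k \<times> ('k \<Rightarrow> 'k) \<Rightarrow> 'k" where
  "seq_code = inv seq_enum"

lemma bij_betw_seq_enum: "bij_betw seq_enum UNIV short_seqs"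
proof -
  have "|UNIV :: 'k set| =o |short_seqs|"
    using ordIso_symmetric[OF ordIso_transitive[OF card_short_seqs r_ordIso_UNIV]] .
  then have "\<exists>F. bij_betw F (UNIV :: 'k set) short_seqs"
    by (simp only: card_of_ordIso[symmetric])
  then show ?thesis
    unfolding seq_enum_def by (rule someI_ex)
qed

lemma seq_enum_surj: "h \<in> underS \<alpha> \<rightarrow>\<^sub>E UNIV \<Longrightarrow> \<exists>\<xi>. seq_enum \<xi> = (\<alpha>, h)"
  using bij_betw_seq_enum by (metis SigmaI UNIV_I bij_betw_imp_surj_on imageE)

lemma seq_code_inj: "s \<in> short_seqs \<Longrightarrow> t \<in> short_seqs \<Longrightarrow> seq_code s = seq_code t \<Longrightarrow> s = t"
  unfolding seq_code_def using bij_betw_seq_enum by (metis bij_betw_imp_surj_on f_inv_into_f)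

lemma card_underS_less: "|underS a| <o |UNIV :: 'k set|"
  using card_of_underS[of r a] card_order card_order_on_Card_order ordLess_ordIso_trans
    r_ordIso_UNIV
  by fastforce

lemma finite_card_less: "finite A \<Longrightarrow> |A| <o |UNIV :: 'k set|"
  using finite_ordLess_infinite[OF card_of_Well_order card_of_Well_order] infinite_kappa
  by (simp add: Field_card_of)

lemma card_under_less: "|under a| <o |UNIV :: 'k set|"
proof -
  have "under a = underS a \<union> {a}"
    using r_le_refl by auto
  then show ?thesis
    using card_of_Un_ordLess_infinite[OF infinite_kappa card_underS_less finite_card_less[of "{a}"]]
    by simp
qed

text \<open>Regularity of \<open>\<kappa>\<close> follows from \<open>\<kappa>\<^sup><\<^sup>\<kappa> = \<kappa>\<close> by diagonalisation: if \<open>S\<close> were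
  cofinal, the sequence of length \<open>\<alpha>\<close> that differs at \<open>e s\<close> from every sequence enumerated
  up to \<open>s\<close> (for all \<open>s \<in> S\<close>) could not be enumerated at all.\<close>
lemma inj_into_underS_bounded:
  assumes e: "inj_on e S" "e ` S \<subseteq> underS \<alpha>"
  shows "\<exists>b. \<forall>s\<in>S. s \<sqsubset> b"
proof (rule ccontr)
  assume "\<not> ?thesis"
  then have cofinal: "\<exists>s\<in>S. b \<sqsubseteq> s" for b
    using r_not_le by blast
  define V where "V s = (\<lambda>\<xi>. snd (seq_enum \<xi>) (e s)) ` under s" for s
  have "\<exists>v. v \<notin> V s" for s
    using card_of_image[of _ "under s"] card_under_less[of s]
    by (metis UNIV_I V_def not_ordLess_ordLeq ordLeq_ordLess_trans subsetI subset_antisym)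
  then have avoid: "(SOME v. v \<notin> V s) \<notin> V s" for s
    by (rule someI_ex)
  define h where "h = restrict (\<lambda>\<beta>. SOME v. v \<notin> V (inv_into S e \<beta>)) (underS \<alpha>)"
  obtain \<xi> where \<xi>: "seq_enum \<xi> = (\<alpha>, h)"
    using seq_enum_surj[of h \<alpha>] unfolding h_def by auto
  obtain s where s: "s \<in> S" "\<xi> \<sqsubseteq> s"
    using cofinal by blast
  then have "h (e s) \<notin> V s"
    unfolding h_def using e avoid by (auto simp: inv_into_f_f)
  moreover have "snd (seq_enum \<xi>) (e s) \<in> V s"
    unfolding V_def using s by auto
  ultimately show False
    using \<xi> by simp
qed

lemma small_set_bounded:
  assumes "|A| <o |UNIV :: 'k set|"
  shows "\<exists>b. \<forall>a\<in>A. a \<sqsubset> b"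
proof -
  have "|A| <o r"
    using assms r_ordIso_UNIV ordLess_ordIso_trans ordIso_symmetric by blast
  then obtain \<alpha> where "|A| =o Restr r (underS \<alpha>)"
    using ordLess_iff_ordIso_Restr[OF WELL card_of_Well_order] by auto
  then have "|A| =o |underS \<alpha>|"
    using card_of_cong[of "|A|"] Field_card_of Field_Restr_ofilter[OF WELL underS_ofilter]
    by metis
  then obtain e where "bij_betw e A (underS \<alpha>)"
    using card_of_ordIso by blast
  then show ?thesis
    using inj_into_underS_bounded unfolding bij_betw_def by blast
qed

lemma image_underS_bounded: "\<exists>b. \<forall>\<beta>\<in>underS \<alpha>. g \<beta> \<sqsubset> b"
  using small_set_bounded[OF ordLeq_ordLess_trans[OF card_of_image card_underS_less]] by blast

lemma ex_greater: "\<exists>b. a \<sqsubset> b"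
  using small_set_bounded[OF finite_card_less[of "{a}"]] by blast

lemma less_suc_singleton: "a \<sqsubset> suc {a}"
proof -
  obtain b where "a \<sqsubset> b"
    using ex_greater by blast
  then have "AboveS {a} \<noteq> {}"
    unfolding AboveS_def by auto
  then show ?thesis
    using suc_greater[of "{a}" a] by auto
qed

lemma suc_singleton_le: "a \<sqsubset> c \<Longrightarrow> suc {a} \<sqsubseteq> c"
  by (rule suc_least_AboveS) (auto simp: AboveS_def)

lemma supr_upper: "|A| <o |UNIV :: 'k set| \<Longrightarrow> a \<in> A \<Longrightarrow> a \<sqsubseteq> supr A"
  using small_set_bounded[of A] minim_mem[of "Above A"] unfolding supr_def Above_def by auto

lemma supr_least: "\<forall>a\<in>A. a \<sqsubseteq> b \<Longrightarrow> supr A \<sqsubseteq> b"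
  unfolding supr_def by (rule minim_le) (simp add: Above_def)

text \<open>By regularity the lengths in the chain are bounded, and the glued point lies in all
  of its members.\<close>
lemma extend_basic_nbhd_chain:
  assumes N: "nowhere_dense_in (kappa_top r) N"
    and chain: "\<And>j j'. j \<sqsubset> j' \<Longrightarrow> j' \<sqsubset> i \<Longrightarrow>
      snd (P j') \<in> basic_nbhd r (fst (P j)) (snd (P j))"
    and start: "\<And>j. j \<sqsubset> i \<Longrightarrow> a0 \<sqsubset> fst (P j) \<and> snd (P j) \<in> basic_nbhd r a0 x0"
  shows "\<exists>l w. a0 \<sqsubset> l \<and> w \<in> basic_nbhd r a0 x0
    \<and> (\<forall>j. j \<sqsubset> i \<longrightarrow> fst (P j) \<sqsubset> l \<and> w \<in> basic_nbhd r (fst (P j)) (snd (P j)))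
    \<and> basic_nbhd r l w \<inter> N = {}"
proof -
  obtain b where b: "\<forall>j\<in>underS i. fst (P j) \<sqsubset> b"
    using image_underS_bounded[of i "\<lambda>j. fst (P j)"] by blast
  define m where "m = suc {max2 b a0}"
  have "max2 b a0 \<sqsubset> m"
    unfolding m_def by (rule less_suc_singleton)
  then have "b \<sqsubset> m" "a0 \<sqsubset> m"
    using max2_ge[of b a0] r_le_less_trans by blast+
  then have m: "a0 \<sqsubset> m" "\<And>j. j \<sqsubset> i \<Longrightarrow> fst (P j) \<sqsubset> m"
    using b r_less_trans[of _ b m] by auto
  define g where "g = glue P (underS i) x0"
  have g: "g \<in> basic_nbhd r (fst (P j)) (snd (P j))" if "j \<sqsubset> i" for j
    unfolding g_def using chain that by (intro glue_mem_basic_nbhd) auto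
  have g0: "g \<in> basic_nbhd r a0 x0"
  proof (cases "\<exists>j. j \<sqsubset> i")
    case True
    then obtain j where "j \<sqsubset> i"
      by blast
    then show ?thesis
      using g[of j] start[of j] basic_nbhd_antimono[of a0 "fst (P j)"]
        basic_nbhd_trans[of _ a0 x0 g] by blast
  next
    case False
    then have "g = x0"
      unfolding g_def glue_def by (auto simp: fun_eq_iff)
    then show ?thesis
      by (simp add: basic_nbhd_self)
  qed
  obtain l w where lw: "m \<sqsubseteq> l" "w \<in> basic_nbhd r m g" "basic_nbhd r l w \<inter> N = {}"
    using nowhere_dense_in_disjoint_basic_nbhd[OF N] by blast
  have "w \<in> basic_nbhd r (fst (P j)) (snd (P j))" if "j \<sqsubset> i" for j
    using g[OF that] lw(2) basic_nbhd_antimono[of "fst (P j)" m] m(2)[OF that]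
      basic_nbhd_trans[of g "fst (P j)" "snd (P j)" w] by blast
  moreover have "w \<in> basic_nbhd r a0 x0"
    using g0 lw(2) basic_nbhd_antimono[of a0 m] m(1) basic_nbhd_trans[of g a0 x0 w] by blast
  moreover have "a0 \<sqsubset> l" "\<And>j. j \<sqsubset> i \<Longrightarrow> fst (P j) \<sqsubset> l"
    using m lw(1) r_less_le_trans[of _ m l] by blast+
  ultimately show ?thesis
    using lw(3) by blast
qed

theorem kappa_Baire_category:
  fixes N :: "'k \<Rightarrow> ('k \<Rightarrow> 'k) set"
  assumes N: "\<And>i. nowhere_dense_in (kappa_top r) (N i)"
  shows "\<exists>x\<in>basic_nbhd r a0 x0. \<forall>i. x \<notin> N i"
proof -
  define extends_chain where "extends_chain P i p \<longleftrightarrow> a0 \<sqsubset> fst p \<and> snd p \<in> basic_nbhd r a0 x0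
    \<and> (\<forall>j. j \<sqsubset> i \<longrightarrow> fst (P j) \<sqsubset> fst p \<and> snd p \<in> basic_nbhd r (fst (P j)) (snd (P j)))
    \<and> basic_nbhd r (fst p) (snd p) \<inter> N i = {}" for P i p
  define P where "P = worec (\<lambda>P i. SOME p. extends_chain P i p)"
  have "adm_wo (\<lambda>P i. SOME p. extends_chain P i p)"
    unfolding adm_wo_def extends_chain_def by auto
  then have P_fix: "P = (\<lambda>i. SOME p. extends_chain P i p)"
    unfolding P_def by (rule worec_fixpoint)
  have P: "P i = (SOME p. extends_chain P i p)" for i
    by (subst P_fix) (rule refl)
  have P_extends_chain: "extends_chain P i (P i)" for i
  proof (induction i rule: well_order_induct)
    case (1 i)
    then have IH: "extends_chain P j (P j)" if "j \<sqsubset> i" for j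
      using that by blast
    have chain: "snd (P j') \<in> basic_nbhd r (fst (P j)) (snd (P j))" if "j \<sqsubset> j'" "j' \<sqsubset> i" for j j'
      using IH[OF that(2)] that(1) unfolding extends_chain_def by blast
    have start: "a0 \<sqsubset> fst (P j) \<and> snd (P j) \<in> basic_nbhd r a0 x0" if "j \<sqsubset> i" for j
      using IH[OF that] unfolding extends_chain_def by blast
    obtain l w where "a0 \<sqsubset> l" "w \<in> basic_nbhd r a0 x0"
      "\<forall>j. j \<sqsubset> i \<longrightarrow> fst (P j) \<sqsubset> l \<and> w \<in> basic_nbhd r (fst (P j)) (snd (P j))"
      "basic_nbhd r l w \<inter> N i = {}"
      using extend_basic_nbhd_chain[of "N i" i P a0 x0, OF N chain start]
      by blast
    then have "extends_chain P i (l, w)"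
      unfolding extends_chain_def by simp
    then have "extends_chain P i (SOME p. extends_chain P i p)"
      by (rule someI)
    then show ?case
      by (simp only: P[symmetric])
  qed
  define x where "x = glue P UNIV x0"
  have x: "x \<in> basic_nbhd r (fst (P i)) (snd (P i))" for i
    unfolding x_def using P_extends_chain unfolding extends_chain_def by (intro glue_mem_basic_nbhd) auto
  then have "x \<notin> N i" for i
    using P_extends_chain unfolding extends_chain_def by blast
  moreover have "x \<in> basic_nbhd r a0 x0"
    using x[of a0] P_extends_chain[of a0] basic_nbhd_antimono[of a0 "fst (P a0)"] basic_nbhd_trans
    unfolding extends_chain_def by blast
  ultimately show ?thesis
    by blast
qed

corollary kappa_Baire_category_open:
  fixes N :: "'k \<Rightarrow> ('k \<Rightarrow> 'k) set"
  assumes "openin (kappa_top r) U" "U \<noteq> {}" "\<And>i. nowhere_dense_in (kappa_top r) (N i)"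
  shows "\<exists>x\<in>U. \<forall>i. x \<notin> N i"
proof -
  obtain x0 a0 where "basic_nbhd r a0 x0 \<subseteq> U"
    using assms(1,2) openin_kappa_top_iff by blast
  then show ?thesis
    using kappa_Baire_category[of N a0 x0, OF assms(3)] by blast
qed

lemma not_kappa_Baire_separating:
  assumes f: "\<And>N. nowhere_dense_in (kappa_top r) N \<Longrightarrow> nowhere_dense_in (kappa_top r) (f -` N)"
    and g: "\<And>N. nowhere_dense_in (kappa_top r) N \<Longrightarrow> nowhere_dense_in (kappa_top r) (g -` N)"
    and g_cont: "continuous_map (kappa_top r) (kappa_top r) g"
    and g_dense: "kappa_top r closure_of range g = UNIV"
    and X: "range f \<subseteq> X" "X \<inter> range g = {}"
  shows "\<not> kappa_Baire r X"
proof
  assume "kappa_Baire r X"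
  then obtain U N where U: "openin (kappa_top r) U"
    and N: "\<And>\<alpha>::'k. nowhere_dense_in (kappa_top r) (N \<alpha>)"
    and XU: "(X - U) \<union> (U - X) \<subseteq> (\<Union>\<alpha>. N \<alpha>)"
    unfolding kappa_Baire_def by blast
  show False
  proof (cases "U = {}")
    case True
    have "\<exists>y\<in>UNIV. \<forall>\<alpha>. y \<notin> f -` N \<alpha>"
      using kappa_Baire_category_open[of UNIV "\<lambda>\<alpha>. f -` N \<alpha>"] f[OF N]
      by (metis UNIV_not_empty openin_topspace topspace_kappa_top)
    then show False
      using X(1) XU True by blast
  next
    case False
    then obtain x where "x \<in> U"
      by blast
    moreover have "x \<in> kappa_top r closure_of range g"
      using g_dense by simp
    ultimately have "g -` U \<noteq> {}"
      using U unfolding in_closure_of by blast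
    moreover have "openin (kappa_top r) (g -` U)"
      using openin_continuous_map_preimage[OF g_cont U] by (simp add: vimage_def)
    ultimately obtain v where "g v \<in> U" "\<forall>\<alpha>. v \<notin> g -` N \<alpha>"
      using kappa_Baire_category_open[of "g -` U" "\<lambda>\<alpha>. g -` N \<alpha>"] g[OF N] by blast
    then show False
      using X(2) XU by blast
  qed
qed

lemma card_image_underS_less: "|f ` underS i| <o |UNIV :: 'k set|"
  using ordLeq_ordLess_trans[OF card_of_image card_underS_less] .

section \<open>The segmented embeddings\<close>

definition limit :: "'k \<Rightarrow> bool" where
  "limit i \<longleftrightarrow> (\<exists>j. j \<sqsubset> i) \<and> (\<forall>j. j \<sqsubset> i \<longrightarrow> suc {j} \<sqsubset> i)"

lemma not_limit_suc: "\<not> limit (suc {j})"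
  unfolding limit_def using less_suc_singleton by blast

lemma not_limit_minim_UNIV: "\<not> limit (minim UNIV)"
  unfolding limit_def using minim_le[of _ UNIV] r_le_antisym by blast

text \<open>The \<open>i\<close>-th segment starting at \<open>s\<close> runs up to the length of the sequence coded by
  \<open>y i\<close>; at limit stages, and when that sequence is too short, it is the single point \<open>s\<close>.\<close>
definition seg_stop :: "('k \<Rightarrow> 'k) \<Rightarrow> 'k \<Rightarrow> 'k \<Rightarrow> 'k" where
  "seg_stop y i s =
     (if \<not> limit i \<and> s \<sqsubset> fst (seq_enum (y i)) then fst (seq_enum (y i)) else suc {s})"

definition seg_start :: "('k \<Rightarrow> 'k) \<Rightarrow> 'k \<Rightarrow> 'k" where
  "seg_start y = worec (\<lambda>S i. supr ((\<lambda>j. seg_stop y j (S j)) ` underS i))"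

definition seg_end :: "('k \<Rightarrow> 'k) \<Rightarrow> 'k \<Rightarrow> 'k" where
  "seg_end y i = seg_stop y i (seg_start y i)"

lemma seg_start_eq: "seg_start y i = supr (seg_end y ` underS i)"
proof -
  have "adm_wo (\<lambda>S i. supr ((\<lambda>j. seg_stop y j (S j)) ` underS i))"
    unfolding adm_wo_def by (intro allI impI arg_cong[where f = supr] image_cong) auto
  then have "seg_start y = (\<lambda>i. supr ((\<lambda>j. seg_stop y j (seg_start y j)) ` underS i))"
    unfolding seg_start_def by (rule worec_fixpoint)
  then show ?thesis
    unfolding seg_end_def by (rule fun_cong)
qed

lemma seg_start_less_end: "seg_start y i \<sqsubset> seg_end y i"
  unfolding seg_end_def seg_stop_def using less_suc_singleton by auto

lemma seg_end_le_start: "j \<sqsubset> i \<Longrightarrow> seg_end y j \<sqsubseteq> seg_start y i"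
  unfolding seg_start_eq by (rule supr_upper[OF card_image_underS_less]) simp

lemma seg_start_least: "(\<And>j. j \<sqsubset> i \<Longrightarrow> seg_end y j \<sqsubseteq> b) \<Longrightarrow> seg_start y i \<sqsubseteq> b"
  unfolding seg_start_eq by (rule supr_least) simp

lemma seg_start_strict_mono: "j \<sqsubset> i \<Longrightarrow> seg_start y j \<sqsubset> seg_start y i"
  using r_less_le_trans[OF seg_start_less_end seg_end_le_start] .

lemma le_seg_start: "i \<sqsubseteq> seg_start y i"
  by (rule strict_mono_r_ge) (rule seg_start_strict_mono)

definition seg_index :: "('k \<Rightarrow> 'k) \<Rightarrow> 'k \<Rightarrow> 'k" where
  "seg_index y \<beta> = minim {i. \<beta> \<sqsubset> seg_end y i}"

lemma seg_index_mem: "\<beta> \<sqsubset> seg_end y (seg_index y \<beta>)"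
proof -
  have "\<beta> \<sqsubset> seg_end y (suc {\<beta>})"
    using r_less_le_trans[OF less_suc_singleton le_seg_start] r_less_trans[OF _ seg_start_less_end]
    by blast
  then show ?thesis
    unfolding seg_index_def by (rule minim_Collect)
qed

lemma seg_index_start: "seg_start y (seg_index y \<beta>) \<sqsubseteq> \<beta>"
proof (rule seg_start_least)
  fix j assume "j \<sqsubset> seg_index y \<beta>"
  then have "\<not> \<beta> \<sqsubset> seg_end y j"
    using minim_le[of j "{i. \<beta> \<sqsubset> seg_end y i}"] r_le_antisym unfolding seg_index_def by blast
  then show "seg_end y j \<sqsubseteq> \<beta>"
    using r_not_le by blast
qed

lemma seg_index_eq:
  assumes "seg_start y i \<sqsubseteq> \<beta>" "\<beta> \<sqsubset> seg_end y i"
  shows "seg_index y \<beta> = i"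
proof (rule ccontr)
  have "seg_index y \<beta> \<sqsubseteq> i"
    unfolding seg_index_def using assms(2) by (intro minim_le) simp
  moreover assume "seg_index y \<beta> \<noteq> i"
  ultimately have "seg_end y (seg_index y \<beta>) \<sqsubseteq> \<beta>"
    using seg_end_le_start assms(1) r_le_trans by blast
  then show False
    using seg_index_mem r_not_le by blast
qed

lemma seg_start_local:
  assumes "y' \<in> basic_nbhd r i y" "k \<sqsubseteq> i"
  shows "seg_start y' k = seg_start y k"
  using assms(2)
proof (induction k rule: well_order_induct)
  case (1 k)
  have "seg_end y' j = seg_end y j" if "j \<sqsubset> k" for j
  proof -
    have "j \<sqsubset> i"
      using that "1.prems" r_less_le_trans by blast
    then have "y' j = y j" and "seg_start y' j = seg_start y j"
      using assms(1) "1.IH" that r_le_trans[of j k i] "1.prems" unfolding mem_basic_nbhd_iff by auto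
    then show ?thesis
      unfolding seg_end_def seg_stop_def by simp
  qed
  then show ?case
    unfolding seg_start_eq by (metis (no_types, lifting) image_cong mem_underS_iff)
qed

lemma seg_end_local: "y' \<in> basic_nbhd r i y \<Longrightarrow> k \<sqsubset> i \<Longrightarrow> seg_end y' k = seg_end y k"
  using seg_start_local[of y' i y k] unfolding seg_end_def seg_stop_def mem_basic_nbhd_iff by auto

lemma seg_start_minim_UNIV: "seg_start y (minim UNIV) = minim UNIV"
proof -
  have "seg_start y (minim UNIV) \<sqsubseteq> minim UNIV"
    using minim_le[of _ UNIV] r_le_antisym by (intro seg_start_least) blast
  then show ?thesis
    using minim_le[of _ UNIV] r_le_antisym by blast
qed

definition flag_code :: "bool \<times> 'k \<Rightarrow> 'k" where
  "flag_code = (SOME f. inj f)"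

lemma inj_flag_code: "inj flag_code"
proof -
  have "|UNIV :: bool set| \<le>o |UNIV :: 'k set|"
    using finite_card_less[of "UNIV :: bool set"] by (simp add: ordLess_imp_ordLeq)
  then have "|UNIV \<times> UNIV :: (bool \<times> 'k) set| =o |UNIV :: 'k set|"
    using card_of_Times_infinite[OF infinite_kappa] by blast
  then have "\<exists>f :: bool \<times> 'k \<Rightarrow> 'k. inj f"
    using card_of_ordLeq[of "UNIV \<times> UNIV :: (bool \<times> 'k) set" "UNIV :: 'k set"] ordIso_iff_ordLeq
    by auto
  then show ?thesis
    unfolding flag_code_def by (rule someI_ex)
qed

text \<open>Restricting \<open>y\<close> to \<open>underS i\<close> keeps the code at stage \<open>i\<close> dependent only on \<open>y\<close> below
  \<open>i\<close>, which continuity requires.\<close>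
definition limit_code :: "'k set \<Rightarrow> ('k \<Rightarrow> 'k) \<Rightarrow> 'k \<Rightarrow> 'k \<Rightarrow> 'k" where
  "limit_code \<gamma> y i p =
     seq_code (p, restrict (\<lambda>\<beta>. flag_code (\<beta> \<in> \<gamma>, restrict y (underS i) \<beta>)) (underS p))"

definition emb :: "'k set \<Rightarrow> ('k \<Rightarrow> 'k) \<Rightarrow> 'k \<Rightarrow> 'k" where
  "emb \<gamma> y \<beta> = (let i = seg_index y \<beta> in
     if limit i then limit_code \<gamma> y i (seg_start y i) else snd (seq_enum (y i)) \<beta>)"

lemma emb_local:
  assumes y': "y' \<in> basic_nbhd r i y" and \<beta>: "\<beta> \<sqsubset> seg_start y i"
  shows "emb \<gamma> y' \<beta> = emb \<gamma> y \<beta>"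
proof -
  define k where "k = seg_index y \<beta>"
  have "k \<sqsubset> i"
  proof (rule ccontr)
    assume "\<not> k \<sqsubset> i"
    then have "seg_start y i \<sqsubseteq> seg_start y k"
      using seg_start_strict_mono[of i k y] r_not_le r_le_refl by metis
    then show False
      using seg_index_start[of y \<beta>] \<beta> r_le_trans r_not_le unfolding k_def by metis
  qed
  then have "seg_start y' k = seg_start y k" "seg_end y' k = seg_end y k"
    using seg_start_local[OF y'] seg_end_local[OF y'] by auto
  then have "seg_index y' \<beta> = k"
    using seg_index_eq seg_index_start seg_index_mem unfolding k_def by metis
  have agree: "y' j = y j" if "j \<sqsubset> i" for j
    using y' that unfolding mem_basic_nbhd_iff by blast
  have "restrict y' (underS k) = restrict y (underS k)"
    using agree r_less_trans[OF _ \<open>k \<sqsubset> i\<close>] by (auto simp: restrict_def fun_eq_iff)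
  moreover have "y' k = y k"
    using agree \<open>k \<sqsubset> i\<close> .
  ultimately show ?thesis
    unfolding emb_def Let_def limit_code_def \<open>seg_index y' \<beta> = k\<close> k_def[symmetric]
    using \<open>seg_start y' k = seg_start y k\<close> by simp
qed

lemma continuous_map_emb: "continuous_map (kappa_top r) (kappa_top r) (emb \<gamma>)"
proof (rule continuous_map_kappa_topI)
  fix y \<alpha>
  have "emb \<gamma> y' \<in> basic_nbhd r \<alpha> (emb \<gamma> y)" if "y' \<in> basic_nbhd r \<alpha> y" for y'
    unfolding mem_basic_nbhd_iff
    using emb_local[OF that] r_less_le_trans[OF _ le_seg_start] by blast
  then show "\<exists>\<theta>. emb \<gamma> ` basic_nbhd r \<theta> y \<subseteq> basic_nbhd r \<alpha> (emb \<gamma> y)"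
    by blast
qed

text \<open>At a non-limit stage the value \<open>y i\<close> is free, so it can be chosen to code any
  prescribed continuation of \<open>emb \<gamma> y\<close>.\<close>
lemma emb_extend:
  assumes i: "\<not> limit i" and x: "x \<in> basic_nbhd r (seg_start y0 i) (emb \<gamma> y0)"
  shows "\<exists>y\<in>basic_nbhd r i y0. emb \<gamma> y \<in> basic_nbhd r b x"
proof -
  define a where "a = seg_start y0 i"
  define b' where "b' = suc {max2 a b}"
  have "max2 a b \<sqsubset> b'"
    unfolding b'_def by (rule less_suc_singleton)
  then have ab': "a \<sqsubset> b'" "b \<sqsubset> b'"
    using max2_ge[of a b] r_le_less_trans by blast+
  obtain c where c: "seq_enum c = (b', restrict x (underS b'))"
    using seq_enum_surj[of "restrict x (underS b')" b'] by auto
  define y where "y = y0(i := c)"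
  have y: "y \<in> basic_nbhd r i y0"
    unfolding y_def mem_basic_nbhd_iff by simp
  have start: "seg_start y i = a"
    unfolding a_def using seg_start_local[OF y r_le_refl] .
  have "seg_end y i = b'"
    unfolding seg_end_def seg_stop_def start using i ab'(1) c unfolding y_def by simp
  have "emb \<gamma> y \<beta> = x \<beta>" if "\<beta> \<sqsubset> b" for \<beta>
  proof (cases "\<beta> \<sqsubset> a")
    case True
    then show ?thesis
      using emb_local[OF y] x unfolding a_def mem_basic_nbhd_iff by simp
  next
    case False
    then have "seg_index y \<beta> = i"
      using seg_index_eq[of y i \<beta>] start \<open>seg_end y i = b'\<close> r_not_le r_less_trans[OF that ab'(2)]
      by (metis r_le_refl)
    then show ?thesis
      unfolding emb_def using i c r_less_trans[OF that ab'(2)] unfolding y_def by simp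
  qed
  then have "emb \<gamma> y \<in> basic_nbhd r b x"
    unfolding mem_basic_nbhd_iff by auto
  with y show ?thesis
    by (intro bexI)
qed

lemma basic_nbhd_subset_closure_emb_image:
  "basic_nbhd r (seg_start y0 (suc {\<theta>})) (emb \<gamma> y0)
     \<subseteq> kappa_top r closure_of (emb \<gamma> ` basic_nbhd r \<theta> y0)"
proof
  fix x assume x: "x \<in> basic_nbhd r (seg_start y0 (suc {\<theta>})) (emb \<gamma> y0)"
  have "basic_nbhd r b x \<inter> emb \<gamma> ` basic_nbhd r \<theta> y0 \<noteq> {}" for b
  proof -
    obtain y where y: "y \<in> basic_nbhd r (suc {\<theta>}) y0" "emb \<gamma> y \<in> basic_nbhd r b x"
      using emb_extend[OF not_limit_suc x] by blast
    moreover have "y \<in> basic_nbhd r \<theta> y0"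
      using y(1) basic_nbhd_antimono[of \<theta> "suc {\<theta>}"] less_suc_singleton by blast
    ultimately show ?thesis
      by blast
  qed
  then show "x \<in> kappa_top r closure_of (emb \<gamma> ` basic_nbhd r \<theta> y0)"
    unfolding in_closure_of_kappa_top_iff by blast
qed

lemma nowhere_dense_in_emb_preimage:
  assumes N: "nowhere_dense_in (kappa_top r) N"
  shows "nowhere_dense_in (kappa_top r) (emb \<gamma> -` N)"
proof -
  have "kappa_top r interior_of (kappa_top r closure_of (emb \<gamma> ` V)) \<noteq> {}"
    if V: "openin (kappa_top r) V" "V \<noteq> {}" for V
  proof -
    obtain y0 \<theta> where "basic_nbhd r \<theta> y0 \<subseteq> V"
      using V openin_kappa_top_iff by blast
    then have "kappa_top r closure_of (emb \<gamma> ` basic_nbhd r \<theta> y0)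
        \<subseteq> kappa_top r closure_of (emb \<gamma> ` V)"
      by (intro closure_of_mono image_mono)
    then have "basic_nbhd r (seg_start y0 (suc {\<theta>})) (emb \<gamma> y0)
        \<subseteq> kappa_top r closure_of (emb \<gamma> ` V)"
      by (rule subset_trans[OF basic_nbhd_subset_closure_emb_image])
    then have "basic_nbhd r (seg_start y0 (suc {\<theta>})) (emb \<gamma> y0)
        \<subseteq> kappa_top r interior_of (kappa_top r closure_of (emb \<gamma> ` V))"
      by (rule interior_of_maximal[OF _ openin_basic_nbhd])
    then show ?thesis
      using basic_nbhd_self by blast
  qed
  then show ?thesis
    using nowhere_dense_in_preimage[OF continuous_map_emb N] by (simp add: vimage_def)
qed

lemma closure_of_range_emb: "kappa_top r closure_of range (emb \<gamma>) = UNIV"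
proof -
  have "basic_nbhd r b x \<inter> range (emb \<gamma>) \<noteq> {}" for x b
    using emb_extend[OF not_limit_minim_UNIV, of x x \<gamma> b]
    by (auto simp: seg_start_minim_UNIV basic_nbhd_minim_UNIV)
  then have "x \<in> kappa_top r closure_of range (emb \<gamma>)" for x
    unfolding in_closure_of_kappa_top_iff by blast
  then show ?thesis
    by blast
qed

end

section \<open>Injectivity\<close>

locale uncountable_kappa_lt_kappa = kappa_lt_kappa r for r :: "'k rel" +
  assumes uncountable_kappa: "\<not> countable (UNIV :: 'k set)"
begin

lemma countable_card_less: "countable (A :: 'a set) \<Longrightarrow> |A| <o |UNIV :: 'k set|"
proof -
  assume "countable A"
  then have "|A| \<le>o |UNIV :: nat set|"
    unfolding countable_def card_of_ordLeq[symmetric] by blast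
  moreover have "\<not> |UNIV :: 'k set| \<le>o |UNIV :: nat set|"
    using uncountable_kappa unfolding countable_def card_of_ordLeq[symmetric] by blast
  then have "|UNIV :: nat set| <o |UNIV :: 'k set|"
    using not_ordLeq_iff_ordLess[OF card_of_Well_order card_of_Well_order] by blast
  ultimately show ?thesis
    by (rule ordLeq_ordLess_trans)
qed

lemma supr_chain:
  assumes inc: "\<And>n. a n \<sqsubset> a (Suc n)"
  shows supr_chain_greater: "a n \<sqsubset> supr (range a)"
    and supr_chain_cofinal: "j \<sqsubset> supr (range a) \<Longrightarrow> \<exists>n. j \<sqsubset> a n"
    and limit_supr_chain: "limit (supr (range a))"
proof -
  have upper: "a n \<sqsubseteq> supr (range a)" for n
    using supr_upper[OF countable_card_less] by simp
  show greater: "a n \<sqsubset> supr (range a)" for n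
    using r_less_le_trans[OF inc upper] .
  show cofinal: "\<exists>n. j \<sqsubset> a n" if "j \<sqsubset> supr (range a)" for j
  proof (rule ccontr)
    assume "\<not> (\<exists>n. j \<sqsubset> a n)"
    then have "supr (range a) \<sqsubseteq> j"
      using r_not_le by (intro supr_least) blast
    then show False
      using that r_le_antisym by blast
  qed
  have "suc {j} \<sqsubset> supr (range a)" if j: "j \<sqsubset> supr (range a)" for j
  proof -
    obtain n where "j \<sqsubset> a n"
      using cofinal[OF j] by blast
    then show ?thesis
      using r_le_less_trans[OF suc_singleton_le greater] by blast
  qed
  then show "limit (supr (range a))"
    unfolding limit_def using greater by blast
qed

lemma seg_start_supr_chain:
  assumes inc: "\<And>n. a n \<sqsubset> a (Suc n)"
  shows "seg_start y (supr (range a)) = supr (range (\<lambda>n. seg_start y (a n)))"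
proof (rule r_le_antisym)
  show "seg_start y (supr (range a)) \<sqsubseteq> supr (range (\<lambda>n. seg_start y (a n)))"
  proof (rule seg_start_least)
    fix j assume "j \<sqsubset> supr (range a)"
    then obtain n where "j \<sqsubset> a n"
      using supr_chain_cofinal[of a, OF inc] by blast
    then have "seg_end y j \<sqsubseteq> seg_start y (a n)"
      by (rule seg_end_le_start)
    moreover have "seg_start y (a n) \<sqsubseteq> supr (range (\<lambda>n. seg_start y (a n)))"
      using supr_upper[OF countable_card_less] by simp
    ultimately show "seg_end y j \<sqsubseteq> supr (range (\<lambda>n. seg_start y (a n)))"
      by (rule r_le_trans)
  qed
  show "supr (range (\<lambda>n. seg_start y (a n))) \<sqsubseteq> seg_start y (supr (range a))"
    using seg_start_strict_mono[OF supr_chain_greater[of a, OF inc]] by (intro supr_least) blast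
qed

text \<open>Each step of the chain \<open>c\<close> overtakes the values of \<open>F\<close> and \<open>G\<close> at the previous
  point, so both functions have the same supremum along \<open>c\<close>; it exists because \<open>cf \<kappa> > \<omega>\<close>.\<close>
lemma ex_limit_common_value:
  assumes F: "\<And>i. i \<sqsubseteq> F i"
      "\<And>a. (\<And>n. a n \<sqsubset> a (Suc n)) \<Longrightarrow> F (supr (range a)) = supr (range (F \<circ> a))"
    and G: "\<And>i. i \<sqsubseteq> G i"
      "\<And>a. (\<And>n. a n \<sqsubset> a (Suc n)) \<Longrightarrow> G (supr (range a)) = supr (range (G \<circ> a))"
  shows "\<exists>l. limit l \<and> b \<sqsubset> l \<and> F l = G l"
proof -
  define c where "c = rec_nat (suc {b}) (\<lambda>_ c. suc {max2 c (max2 (F c) (G c))})"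
  have c_Suc: "max2 (c n) (max2 (F (c n)) (G (c n))) \<sqsubset> c (Suc n)" for n
    unfolding c_def by (simp add: less_suc_singleton)
  have inc: "c n \<sqsubset> c (Suc n)" and "F (c n) \<sqsubset> c (Suc n)" and "G (c n) \<sqsubset> c (Suc n)" for n
    using c_Suc[of n] max2_ge r_le_trans r_le_less_trans by metis+
  have upper: "H (c n) \<sqsubseteq> supr (range (H \<circ> c))" for H n
    using supr_upper[OF countable_card_less] by simp
  have FG: "F (c n) \<sqsubseteq> supr (range (G \<circ> c))" and GF: "G (c n) \<sqsubseteq> supr (range (F \<circ> c))" for n
    using r_le_trans[OF _ upper] F(1)[of "c (Suc n)"] G(1)[of "c (Suc n)"]
      \<open>F (c n) \<sqsubset> c (Suc n)\<close> \<open>G (c n) \<sqsubset> c (Suc n)\<close> r_le_trans by meson+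
  have "F (supr (range c)) = G (supr (range c))"
    unfolding F(2)[of c, OF inc] G(2)[of c, OF inc]
    using FG GF by (intro r_le_antisym supr_least) auto
  moreover have "b \<sqsubset> supr (range c)"
    using r_less_trans[OF _ supr_chain_greater[of c, OF inc, of 0]] less_suc_singleton
    unfolding c_def by simp
  ultimately show ?thesis
    using limit_supr_chain[of c, OF inc] by blast
qed

lemma emb_inject: "emb \<gamma> y = emb \<delta> y' \<longleftrightarrow> \<gamma> = \<delta> \<and> y = y'"
proof
  assume eq: "emb \<gamma> y = emb \<delta> y'"
  have "(b \<in> \<gamma> \<longleftrightarrow> b \<in> \<delta>) \<and> y b = y' b" for b
  proof -
    have "\<exists>l. limit l \<and> b \<sqsubset> l \<and> seg_start y l = seg_start y' l"
      using ex_limit_common_value[of "seg_start y" "seg_start y'" b]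
        le_seg_start seg_start_supr_chain by (simp add: comp_def)
    then obtain l where l: "limit l" "b \<sqsubset> l" "seg_start y l = seg_start y' l"
      by blast
    define p where "p = seg_start y l"
    have "seg_index y p = l" "seg_index y' p = l"
      using seg_index_eq r_le_refl seg_start_less_end l(3) unfolding p_def by metis+
    then have "limit_code \<gamma> y l p = limit_code \<delta> y' l p"
      using fun_cong[OF eq, of p] l(1,3) unfolding emb_def p_def by simp
    then have "(p, restrict (\<lambda>\<beta>. flag_code (\<beta> \<in> \<gamma>, restrict y (underS l) \<beta>)) (underS p))
        = (p, restrict (\<lambda>\<beta>. flag_code (\<beta> \<in> \<delta>, restrict y' (underS l) \<beta>)) (underS p))"
      unfolding limit_code_def by (rule seq_code_inj[rotated 2]) auto
    moreover have "b \<sqsubset> p"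
      using r_less_le_trans[OF l(2) le_seg_start] unfolding p_def .
    ultimately have "flag_code (b \<in> \<gamma>, y b) = flag_code (b \<in> \<delta>, y' b)"
      using l(2) by (auto dest!: fun_cong[of _ _ b])
    then show ?thesis
      using inj_flag_code by (auto dest: injD)
  qed
  then show "\<gamma> = \<delta> \<and> y = y'"
    by auto
qed simp

end

theorem theorem1p8:
  fixes r :: "'k rel"
  assumes "card_order r"
    and "\<not> countable (UNIV :: 'k set)"
    and "(card_of (SIGMA \<alpha>:(UNIV::'k set). underS r \<alpha> \<rightarrow>\<^sub>E (UNIV :: 'k set)), r) \<in> ordIso"
  shows "\<exists>A :: 'k set \<Rightarrow> ('k \<Rightarrow> 'k) set.
           (\<forall>\<gamma> \<delta>. \<gamma> \<noteq> \<delta> \<longrightarrow> A \<gamma> \<inter> A \<delta> = {})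
         \<and> (\<forall>\<gamma>. \<exists>f. continuous_map (kappa_top r) (kappa_top r) f \<and> inj f \<and> A \<gamma> = range f)
         \<and> (\<forall>\<gamma> \<delta>. \<gamma> \<noteq> \<delta> \<longrightarrow>
              \<not> (\<exists>X. kappa_Baire r X \<and> A \<gamma> \<subseteq> X \<and> X \<subseteq> UNIV - A \<delta>))"
proof -
  interpret uncountable_kappa_lt_kappa r
    using assms countable_finite by unfold_locales auto
  show ?thesis
  proof (intro exI[of _ "\<lambda>\<gamma>. range (emb \<gamma>)"] conjI allI impI)
    fix \<gamma> \<delta> :: "'k set" assume "\<gamma> \<noteq> \<delta>"
    then show "range (emb \<gamma>) \<inter> range (emb \<delta>) = {}"
      by (auto simp: emb_inject)
  next
    fix \<gamma> :: "'k set"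
    have "inj (emb \<gamma>)"
      by (auto intro: injI simp: emb_inject)
    then show "\<exists>f. continuous_map (kappa_top r) (kappa_top r) f \<and> inj f \<and> range (emb \<gamma>) = range f"
      using continuous_map_emb by (intro exI[of _ "emb \<gamma>"]) simp
  next
    fix \<gamma> \<delta> :: "'k set" assume "\<gamma> \<noteq> \<delta>"
    have "\<not> kappa_Baire r X" if "range (emb \<gamma>) \<subseteq> X" "X \<inter> range (emb \<delta>) = {}" for X
      using not_kappa_Baire_separating[of "emb \<gamma>" "emb \<delta>", OF nowhere_dense_in_emb_preimage
          nowhere_dense_in_emb_preimage continuous_map_emb closure_of_range_emb that] .
    then show "\<not> (\<exists>X. kappa_Baire r X \<and> range (emb \<gamma>) \<subseteq> X \<and> X \<subseteq> UNIV - range (emb \<delta>))"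
      by blast
  qed
qed

end
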